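(* Let $\gamma=000\cdots\in\Omega$ be the all-zero sequence and $B=\Omega\setminus\{\gamma\}$. Then $B\in\mathcal{B}_{\mathcal{U}}$ and $\widehat{\mu}(B)=1$.
   Context: For $n\ge1$, $\Omega_n$ is the set of strings $\alpha_0\alpha_1\cdots\alpha_n$ with $\alpha_k\in\{0,1\}$, $\alpha_0=0$. For $\omega=\alpha_0\cdots\alpha_n$, $\omega'=\alpha'_0\cdots\alpha'_n\in\Omega_n$ let $D^n(\omega,\omega')=2^{-n}\prod_{k=1}^n i^{|\alpha_k-\alpha_{k-1}|}\prod_{k=1}^n i^{-|\alpha'_k-\alpha'_{k-1}|}\,\delta_{\alpha_n\alpha'_n}$ ($i=\sqrt{-1}$) and for $A\subseteq\Omega_n$, $\mu_n(A)=\sum_{\omega,\omega'\in A}D^n(\omega,\omega')$. $\Omega$ is the set of infinite sequences $\alpha_0\alpha_1\cdots$ with $\alpha_k\in\{0,1\}$, $\alpha_0=0$. A cylinder set is a set $\{\alpha_0\alpha_1\cdots\in\Omega:\alpha_0\cdots\alpha_n\in E\}$ with $E\subseteq\Omega_n$; its measure is $\mu(\cdot)=\mu_n(E)$ (well defined). For $A\subseteq\Omega$ and $n\ge0$, $A^{(n)}=\{\omega\in\Omega:\text{some }\omega'\in A\text{ has the same first }n+1\text{ entries as }\omega\}$ (a cylinder set). $A$ is an upper set if $A=\bigcup_n\big(\Omega\setminus(\Omega\setminus A)^{(n)}\big)$; $\mathcal{U}$ is the collection of upper sets; $\mathcal{B}_{\mathcal{U}}=\{A\in\mathcal{U}:\lim_{n\to\infty}\mu\big(\Omega\setminus(\Omega\setminus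 A)^{(n)}\big)\text{ exists}\}$, and for $A\in\mathcal{B}_{\mathcal{U}}$, $\widehat{\mu}(A)=\lim_{n\to\infty}\mu\big(\Omega\setminus(\Omega\setminus A)^{(n)}\big)$. *)

theory Defs
  imports Complex_Main
begin

definition Omega_n :: "nat \<Rightarrow> nat list set" where
  "Omega_n n = {xs. length xs = n + 1 \<and> set xs \<subseteq> {0, 1} \<and> xs ! 0 = 0}"

definition jump :: "nat list \<Rightarrow> nat \<Rightarrow> nat" where
  "jump xs k = nat \<bar>int (xs ! k) - int (xs ! (k - 1))\<bar>"

definition D :: "nat \<Rightarrow> nat list \<Rightarrow> nat list \<Rightarrow> complex" where
  "D n w w' = (1 / 2 ^ n) * (\<Prod>k\<in>{1..n}. \<i> ^ jump w k)
      * (\<Prod>k\<in>{1..n}. inverse (\<i> ^ jump w' k))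
      * (if w ! n = w' ! n then 1 else 0)"

definition mu_n :: "nat \<Rightarrow> nat list set \<Rightarrow> complex" where
  "mu_n n A = (\<Sum>w\<in>A. \<Sum>w'\<in>A. D n w w')"

definition Omega :: "(nat \<Rightarrow> nat) set" where
  "Omega = {w. (\<forall>k. w k \<in> {0, 1}) \<and> w 0 = 0}"

definition prefix :: "nat \<Rightarrow> (nat \<Rightarrow> nat) \<Rightarrow> nat list" where
  "prefix n w = map w [0..<n + 1]"

definition cyl :: "nat \<Rightarrow> nat list set \<Rightarrow> (nat \<Rightarrow> nat) set" where
  "cyl n E = {w \<in> Omega. prefix n w \<in> E}"

definition is_cylinder :: "(nat \<Rightarrow> nat) set \<Rightarrow> bool" where
  "is_cylinder C \<longleftrightarrow> (\<exists>n E. E \<subseteq> Omega_n n \<and> C = cyl n E)"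

text \<open>Measure of a cylinder set (well defined, i.e. independent of the representation).\<close>
definition mu :: "(nat \<Rightarrow> nat) set \<Rightarrow> complex" where
  "mu C = (SOME m. \<exists>n E. E \<subseteq> Omega_n n \<and> C = cyl n E \<and> m = mu_n n E)"

definition approx :: "(nat \<Rightarrow> nat) set \<Rightarrow> nat \<Rightarrow> (nat \<Rightarrow> nat) set" where
  "approx A n = {w \<in> Omega. \<exists>w'\<in>A. \<forall>k\<le>n. w k = w' k}"

definition upper_sets :: "(nat \<Rightarrow> nat) set set" where
  "upper_sets = {A. A \<subseteq> Omega \<and> A = (\<Union>n. Omega - approx (Omega - A) n)}"

definition B_U :: "(nat \<Rightarrow> nat) set set" where
  "B_U = {A \<in> upper_sets. convergent (\<lambda>n. mu (Omega - approx (Omega - A) n))}"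

definition mu_hat :: "(nat \<Rightarrow> nat) set \<Rightarrow> complex" where
  "mu_hat A = lim (\<lambda>n. mu (Omega - approx (Omega - A) n))"

end

theory Submission
  imports Defs
begin

text \<open>Write the phase of a string as the product of the factors \<open>i^|\<alpha>\<^sub>k - \<alpha>\<^sub>k\<^sub>-\<^sub>1|\<close> and let
  \<open>a\<^sub>b(X)\<close> be the sum of the phases of the strings in \<open>X\<close> ending in \<open>b\<close>. Then
  \<open>\<mu>\<^sub>m(X) = (|a\<^sub>0|\<^sup>2 + |a\<^sub>1|\<^sup>2) / 2\<^sup>m\<close>. Appending a free last letter maps \<open>(a\<^sub>0, a\<^sub>1)\<close> to
  \<open>(a\<^sub>0 + i a\<^sub>1, i a\<^sub>0 + a\<^sub>1)\<close>, which doubles \<open>|a\<^sub>0|\<^sup>2 + |a\<^sub>1|\<^sup>2\<close>; hence refining a cylinder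
  does not change its measure, and \<open>|a\<^sub>0(\<Omega>\<^sub>n)|\<^sup>2 \<le> 2\<^sup>n\<close>.
  The \<open>n\<close>-th approximation of \<open>B\<close> is the cylinder over \<open>\<Omega>\<^sub>n\<close> minus the zero string, whose
  phase is 1, so its measure is \<open>1 + (1 - 2 Re a\<^sub>0(\<Omega>\<^sub>n)) / 2\<^sup>n \<longrightarrow> 1\<close>.\<close>

definition phase :: "nat \<Rightarrow> nat list \<Rightarrow> complex" where
  "phase m w = (\<Prod>k\<in>{1..m}. \<i> ^ jump w k)"

definition amp :: "nat \<Rightarrow> nat list set \<Rightarrow> nat \<Rightarrow> complex" where
  "amp m X b = (\<Sum>w\<in>{w\<in>X. w!m = b}. phase m w)"

definition energy :: "nat \<Rightarrow> nat list set \<Rightarrow> complex" where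
  "energy m X = amp m X 0 * cnj (amp m X 0) + amp m X 1 * cnj (amp m X 1)"

definition extend :: "nat list set \<Rightarrow> nat list set" where
  "extend X = (\<lambda>w. w @ [0]) ` X \<union> (\<lambda>w. w @ [1]) ` X"

lemma finite_Omega_n: "finite (Omega_n m)"
proof -
  have "Omega_n m \<subseteq> {xs. set xs \<subseteq> {0, 1} \<and> length xs = m + 1}"
    by (auto simp: Omega_n_def)
  moreover have "finite {xs. set xs \<subseteq> {0::nat, 1} \<and> length xs = m + 1}"
    by (rule finite_lists_length_eq) auto
  ultimately show ?thesis by (rule finite_subset)
qed

lemma Omega_n_nth_last: "w \<in> Omega_n m \<Longrightarrow> w ! m = 0 \<or> w ! m = 1"
proof -
  assume "w \<in> Omega_n m"
  then have "w ! m \<in> set w" "set w \<subseteq> {0, 1}" by (auto simp: Omega_n_def)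
  then show ?thesis by auto
qed

lemma sum_split_last:
  assumes "X \<subseteq> Omega_n m"
  shows "(\<Sum>w\<in>X. g w) = (\<Sum>w\<in>{w\<in>X. w!m = 0}. g w) + (\<Sum>w\<in>{w\<in>X. w!m = 1}. g w)"
proof -
  have "finite X" using assms finite_Omega_n finite_subset by blast
  moreover have "X = {w\<in>X. w!m = 0} \<union> {w\<in>X. w!m = 1}"
    using assms Omega_n_nth_last by blast
  ultimately show ?thesis by (subst (1) \<open>X = _\<close>, subst sum.union_disjoint) auto
qed

lemma prod_inverse_jump_eq_cnj_phase:
  "(\<Prod>k\<in>{1..m}. inverse (\<i> ^ jump w k)) = cnj (phase m w)"
  unfolding phase_def cnj_prod by (simp add: power_inverse[symmetric])

lemma mu_n_eq_energy:
  assumes X: "X \<subseteq> Omega_n m"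
  shows "mu_n m X = energy m X / 2 ^ m"
proof -
  have fin: "finite X" using X finite_Omega_n finite_subset by blast
  have "mu_n m X = (\<Sum>w\<in>X. \<Sum>w'\<in>X.
      (1/2^m) * (phase m w * (if w'!m = w!m then cnj (phase m w') else 0)))"
    unfolding mu_n_def D_def prod_inverse_jump_eq_cnj_phase
    by (intro sum.cong refl) (auto simp: phase_def)
  also have "\<dots> = (1/2^m) * (\<Sum>w\<in>X. phase m w * cnj (amp m X (w!m)))"
    by (simp add: sum_distrib_left[symmetric] sum_distrib_left sum.inter_filter[OF fin]
        amp_def cnj_sum mult_ac if_distrib cong: if_cong)
  also have "(\<Sum>w\<in>X. phase m w * cnj (amp m X (w!m))) = energy m X"
    unfolding sum_split_last[OF X] energy_def
    by (simp add: sum_distrib_right[symmetric] amp_def)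
  finally show ?thesis by simp
qed

lemma phase_snoc:
  assumes "length w = Suc m"
  shows "phase (Suc m) (w @ [b]) = phase m w * \<i> ^ nat \<bar>int b - int (w!m)\<bar>"
proof -
  have "phase (Suc m) (w @ [b]) =
      (\<Prod>k\<in>{1..m}. \<i> ^ jump (w @ [b]) k) * \<i> ^ jump (w @ [b]) (Suc m)"
    unfolding phase_def by (simp add: prod.nat_ivl_Suc')
  also have "(\<Prod>k\<in>{1..m}. \<i> ^ jump (w @ [b]) k) = phase m w"
    unfolding phase_def using assms by (intro prod.cong refl) (auto simp: jump_def nth_append)
  also have "jump (w @ [b]) (Suc m) = nat \<bar>int b - int (w!m)\<bar>"
    using assms by (simp add: jump_def nth_append)
  finally show ?thesis .
qed

lemma amp_extend:
  assumes X: "X \<subseteq> Omega_n m" and b: "b = 0 \<or> b = 1"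
  shows "amp (Suc m) (extend X) b =
    (if b = 0 then amp m X 0 + \<i> * amp m X 1 else \<i> * amp m X 0 + amp m X 1)"
proof -
  have len: "\<And>w. w \<in> X \<Longrightarrow> length w = Suc m" using X by (auto simp: Omega_n_def)
  have "{v\<in>extend X. v!(Suc m) = b} = (\<lambda>w. w @ [b]) ` X"
    using b len by (auto simp: extend_def nth_append)
  then have "amp (Suc m) (extend X) b = (\<Sum>w\<in>X. phase (Suc m) (w @ [b]))"
    unfolding amp_def by (simp add: sum.reindex inj_on_def)
  also have "\<dots> = (\<Sum>w\<in>X. phase m w * \<i> ^ nat \<bar>int b - int (w!m)\<bar>)"
    using len phase_snoc by (intro sum.cong refl) auto
  also have "\<dots> = (if b = 0 then amp m X 0 + \<i> * amp m X 1 else \<i> * amp m X 0 + amp m X 1)"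
    unfolding sum_split_last[OF X] using b unfolding amp_def
    by (auto simp: sum_distrib_left mult.commute)
  finally show ?thesis .
qed

lemma energy_extend:
  assumes "X \<subseteq> Omega_n m"
  shows "energy (Suc m) (extend X) = 2 * energy m X"
  unfolding energy_def using amp_extend[OF assms, of 0] amp_extend[OF assms, of 1]
  by (simp add: algebra_simps)

lemma Omega_n_Suc_iff:
  "v \<in> Omega_n (Suc m) \<longleftrightarrow> (\<exists>w b. v = w @ [b] \<and> w \<in> Omega_n m \<and> (b = 0 \<or> b = 1))"
proof
  assume v: "v \<in> Omega_n (Suc m)"
  then have "v \<noteq> []" by (auto simp: Omega_n_def)
  then obtain w b where vw: "v = w @ [b]" by (metis append_butlast_last_id)
  show "\<exists>w b. v = w @ [b] \<and> w \<in> Omega_n m \<and> (b = 0 \<or> b = 1)"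
    using v unfolding vw Omega_n_def by (auto simp: nth_append split: if_split_asm)
qed (auto simp: Omega_n_def nth_append)

lemma Omega_n_Suc: "Omega_n (Suc m) = extend (Omega_n m)"
  unfolding extend_def by (auto simp: Omega_n_Suc_iff)

lemma energy_Omega_n: "energy m (Omega_n m) = 2 ^ m"
proof (induction m)
  case 0
  have "Omega_n 0 = {[0]}" by (auto simp: Omega_n_def length_Suc_conv)
  moreover have "{w\<in>{[0::nat]}. w!0 = 0} = {[0]}" "{w\<in>{[0::nat]}. w!0 = 1} = {}" by auto
  ultimately show ?case by (simp add: energy_def amp_def phase_def)
next
  case (Suc m)
  then show ?case using energy_extend[of "Omega_n m" m] by (simp add: Omega_n_Suc)
qed

lemma mu_n_extend:
  assumes "X \<subseteq> Omega_n m"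
  shows "mu_n (Suc m) (extend X) = mu_n m X"
proof -
  have "extend X \<subseteq> Omega_n (Suc m)"
    using assms unfolding Omega_n_Suc extend_def by blast
  then show ?thesis
    using assms by (simp add: mu_n_eq_energy energy_extend)
qed

lemma cmod_amp_Omega_n_le: "cmod (amp n (Omega_n n) 0) \<le> sqrt 2 ^ n"
proof -
  let ?a = "amp n (Omega_n n) 0" and ?b = "amp n (Omega_n n) 1"
  have "complex_of_real ((cmod ?a)\<^sup>2 + (cmod ?b)\<^sup>2) = 2 ^ n"
    using energy_Omega_n[of n] unfolding energy_def of_real_add complex_norm_square by simp
  then have "(cmod ?a)\<^sup>2 + (cmod ?b)\<^sup>2 = 2 ^ n"
    using of_real_eq_iff[of "(cmod ?a)\<^sup>2 + (cmod ?b)\<^sup>2" "2 ^ n", where 'a=complex] by simp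
  then have "(cmod ?a)\<^sup>2 \<le> 2 ^ n" by (metis le_add_same_cancel1 zero_le_power2)
  then have "cmod ?a \<le> sqrt (2 ^ n)" using real_le_rsqrt by blast
  then show ?thesis by (simp add: real_sqrt_power)
qed

definition nonzero_upto :: "nat \<Rightarrow> nat \<Rightarrow> nat list set" where
  "nonzero_upto m n = {w \<in> Omega_n m. \<exists>k\<le>n. w!k \<noteq> 0}"

lemma nonzero_upto_subset: "nonzero_upto m n \<subseteq> Omega_n m"
  by (auto simp: nonzero_upto_def)

lemma nonzero_upto_Suc:
  assumes "n \<le> m"
  shows "nonzero_upto (Suc m) n = extend (nonzero_upto m n)"
proof -
  have "(w @ [b]) ! k = w ! k" if "w \<in> Omega_n m" "k \<le> n" for w b k
    using assms that by (auto simp: Omega_n_def nth_append)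
  then show ?thesis
    unfolding nonzero_upto_def Omega_n_Suc extend_def by (auto 4 3 intro: image_eqI)
qed

lemma mu_n_nonzero_upto:
  assumes "n \<le> m"
  shows "mu_n m (nonzero_upto m n) = mu_n n (nonzero_upto n n)"
  using assms
proof (induction m rule: dec_induct)
  case (step m)
  then show ?case
    by (simp add: nonzero_upto_Suc mu_n_extend nonzero_upto_subset)
qed simp

lemma nonzero_upto_self: "nonzero_upto n n = Omega_n n - {replicate (Suc n) 0}"
proof -
  have "(\<exists>k\<le>n. w!k \<noteq> 0) \<longleftrightarrow> w \<noteq> replicate (Suc n) 0" if "w \<in> Omega_n n" for w
  proof
    assume "w \<noteq> replicate (Suc n) 0"
    moreover have "length w = Suc n" using that by (simp add: Omega_n_def)
    ultimately show "\<exists>k\<le>n. w!k \<noteq> 0"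
      by (metis (no_types, lifting) in_set_conv_nth less_Suc_eq_le replicate_eqI)
  qed (auto simp del: replicate_Suc)
  then show ?thesis
    unfolding nonzero_upto_def by blast
qed

lemma phase_zeros: "phase m (replicate (Suc m) 0) = 1"
  unfolding phase_def jump_def
  by (intro prod.neutral) (auto simp: nth_replicate simp del: replicate_Suc)

lemma amp_nonzero_upto_self:
  "amp n (nonzero_upto n n) b = amp n (Omega_n n) b - (if b = 0 then 1 else 0)"
proof -
  define z where "z = replicate (Suc n) (0::nat)"
  have z: "z \<in> Omega_n n" "z ! n = 0" "phase n z = 1"
    unfolding z_def by (simp_all add: Omega_n_def phase_zeros del: replicate_Suc)
  have fin: "finite {w \<in> Omega_n n. w!n = b}" using finite_Omega_n by simp
  have eq: "{w \<in> nonzero_upto n n. w!n = b} = {w \<in> Omega_n n. w!n = b} - {z}"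
    unfolding nonzero_upto_self z_def by blast
  show ?thesis
  proof (cases "b = 0")
    case True
    then have "z \<in> {w \<in> Omega_n n. w!n = b}" using z by blast
    then show ?thesis unfolding amp_def eq using fin True z by (simp add: sum_diff1)
  next
    case False
    then have "{w \<in> Omega_n n. w!n = b} - {z} = {w \<in> Omega_n n. w!n = b}" using z by blast
    then show ?thesis unfolding amp_def eq using False by simp
  qed
qed

lemma mu_n_nonzero_upto_self:
  "mu_n n (nonzero_upto n n) =
    1 + (1 - amp n (Omega_n n) 0 - cnj (amp n (Omega_n n) 0)) / 2 ^ n"
proof -
  have "energy n (nonzero_upto n n) =
      energy n (Omega_n n) + (1 - amp n (Omega_n n) 0 - cnj (amp n (Omega_n n) 0))"
    unfolding energy_def amp_nonzero_upto_self by (simp add: algebra_simps complex_cnj_diff)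
  then show ?thesis
    by (simp add: mu_n_eq_energy nonzero_upto_subset energy_Omega_n add_divide_distrib)
qed

lemma norm_mu_n_nonzero_upto_self_minus_one_le:
  "norm (mu_n n (nonzero_upto n n) - 1) \<le> (1/2) ^ n + 2 * (1 / sqrt 2) ^ n"
proof -
  let ?a = "amp n (Omega_n n) 0"
  have "norm (1 - ?a - cnj ?a) \<le> norm (1 - ?a) + norm (cnj ?a)"
    by (rule norm_triangle_ineq4)
  also have "norm (1 - ?a) \<le> norm (1::complex) + norm ?a"
    by (rule norm_triangle_ineq4)
  finally have "norm (1 - ?a - cnj ?a) \<le> 1 + 2 * sqrt 2 ^ n"
    using cmod_amp_Omega_n_le[of n] by simp
  moreover have "norm (mu_n n (nonzero_upto n n) - 1) = norm (1 - ?a - cnj ?a) / 2 ^ n"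
    by (simp add: mu_n_nonzero_upto_self norm_divide norm_power)
  ultimately have "norm (mu_n n (nonzero_upto n n) - 1) \<le> (1 + 2 * sqrt 2 ^ n) / 2 ^ n"
    by (simp add: divide_right_mono)
  also have "\<dots> = (1/2) ^ n + 2 * (1 / sqrt 2) ^ n"
  proof -
    have two: "(2::real) ^ n = sqrt 2 ^ n * sqrt 2 ^ n"
      by (simp flip: power_mult_distrib)
    have "(1 + 2 * sqrt 2 ^ n) / 2 ^ n = 1 / 2 ^ n + 2 * (sqrt 2 ^ n / (sqrt 2 ^ n * sqrt 2 ^ n))"
      unfolding two by (simp add: add_divide_distrib)
    also have "\<dots> = (1/2) ^ n + 2 * (1 / sqrt 2) ^ n"
      by (simp add: power_divide two)
    finally show ?thesis .
  qed
  finally show ?thesis .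
qed

lemma mu_n_nonzero_upto_self_tendsto: "(\<lambda>n. mu_n n (nonzero_upto n n)) \<longlonglongrightarrow> 1"
proof -
  have "(\<lambda>n. (1/2::real) ^ n) \<longlonglongrightarrow> 0" "(\<lambda>n. (1 / sqrt 2::real) ^ n) \<longlonglongrightarrow> 0"
    by (rule LIMSEQ_power_zero; simp)+
  then have "(\<lambda>n. (1/2::real) ^ n + 2 * (1 / sqrt 2) ^ n) \<longlonglongrightarrow> 0 + 2 * 0"
    by (intro tendsto_add tendsto_mult tendsto_const)
  then have bound: "(\<lambda>n. (1/2::real) ^ n + 2 * (1 / sqrt 2) ^ n) \<longlonglongrightarrow> 0"
    by simp
  have "(\<lambda>n. norm (mu_n n (nonzero_upto n n) - 1)) \<longlonglongrightarrow> 0"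
    using norm_mu_n_nonzero_upto_self_minus_one_le
    by (intro real_tendsto_sandwich[OF _ _ tendsto_const bound]) auto
  then show ?thesis
    by (simp add: LIM_zero_iff tendsto_norm_zero_iff)
qed

lemma prefix_nth: "k \<le> m \<Longrightarrow> prefix m w ! k = w k"
  unfolding prefix_def by (simp add: nth_map_upt less_Suc_eq_le del: upt_Suc)

lemma prefix_in_Omega_n: "w \<in> Omega \<Longrightarrow> prefix m w \<in> Omega_n m"
  unfolding prefix_def Omega_def Omega_n_def by (auto simp del: upt_Suc) (metis neq0_conv)

definition zero_pad :: "nat list \<Rightarrow> nat \<Rightarrow> nat" where
  "zero_pad x k = (if k < length x then x ! k else 0)"

lemma zero_pad_in_Omega: "x \<in> Omega_n m \<Longrightarrow> zero_pad x \<in> Omega"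
  unfolding zero_pad_def Omega_def Omega_n_def by auto (metis insertE nth_mem subsetD empty_iff)

lemma prefix_zero_pad: "x \<in> Omega_n m \<Longrightarrow> prefix m (zero_pad x) = x"
  unfolding zero_pad_def Omega_n_def prefix_def
  by (intro nth_equalityI) (auto simp del: upt_Suc)

lemma cyl_inject:
  assumes "E \<subseteq> Omega_n m" "E' \<subseteq> Omega_n m" "cyl m E = cyl m E'"
  shows "E = E'"
proof -
  have "x \<in> F'" if "F \<subseteq> Omega_n m" "cyl m F = cyl m F'" "x \<in> F" for F F' x
  proof -
    have x: "x \<in> Omega_n m" using that by blast
    then have "zero_pad x \<in> cyl m F"
      unfolding cyl_def using that zero_pad_in_Omega prefix_zero_pad by auto
    then show ?thesis
      using that(2) prefix_zero_pad[OF x] unfolding cyl_def by auto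
  qed
  then show ?thesis using assms by blast
qed

definition nonzero_seqs :: "nat \<Rightarrow> (nat \<Rightarrow> nat) set" where
  "nonzero_seqs n = {w \<in> Omega. \<exists>k\<le>n. w k \<noteq> 0}"

lemma nonzero_seqs_eq_cyl: "n \<le> m \<Longrightarrow> nonzero_seqs n = cyl m (nonzero_upto m n)"
  unfolding nonzero_seqs_def cyl_def nonzero_upto_def using prefix_in_Omega_n prefix_nth by auto

lemma nonzero_seqs_eq_cyl_imp_le:
  assumes "nonzero_seqs n = cyl m E"
  shows "n \<le> m"
proof (rule ccontr)
  assume "\<not> n \<le> m"
  define w :: "nat \<Rightarrow> nat" where "w = (\<lambda>k. if k = n then 1 else 0)"
  have "w \<in> nonzero_seqs n" "(\<lambda>k. 0) \<notin> nonzero_seqs n"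
    using \<open>\<not> n \<le> m\<close> unfolding nonzero_seqs_def Omega_def w_def by auto
  moreover have "prefix m w = prefix m (\<lambda>k. 0)"
    unfolding prefix_def w_def using \<open>\<not> n \<le> m\<close> by (auto simp del: upt_Suc)
  moreover have "(\<lambda>k. 0) \<in> Omega" unfolding Omega_def by auto
  ultimately show False using assms unfolding cyl_def by auto
qed

text \<open>Representations of this cylinder differ only in their length, and refinement preserves
  \<open>mu_n\<close>; so the choice in \<open>mu\<close> is harmless without proving well-definedness in general.\<close>

lemma mu_nonzero_seqs: "mu (nonzero_seqs n) = mu_n n (nonzero_upto n n)"
proof -
  let ?P = "\<lambda>v. \<exists>m E. E \<subseteq> Omega_n m \<and> nonzero_seqs n = cyl m E \<and> v = mu_n m E"
  have "\<exists>v. ?P v" using nonzero_seqs_eq_cyl[of n n] nonzero_upto_subset by blast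
  then have "?P (mu (nonzero_seqs n))"
    unfolding mu_def by (rule someI_ex)
  then obtain m E where E: "E \<subseteq> Omega_n m" "nonzero_seqs n = cyl m E"
      and mu: "mu (nonzero_seqs n) = mu_n m E"
    by blast
  have "n \<le> m" using E(2) by (rule nonzero_seqs_eq_cyl_imp_le)
  then have "E = nonzero_upto m n"
    using cyl_inject[OF E(1) nonzero_upto_subset] E(2) nonzero_seqs_eq_cyl by simp
  then show ?thesis using mu mu_n_nonzero_upto[OF \<open>n \<le> m\<close>] by simp
qed

theorem theorem4p6:
  fixes \<gamma> :: "nat \<Rightarrow> nat" and B :: "(nat \<Rightarrow> nat) set"
  assumes "\<gamma> = (\<lambda>k. 0)" and "B = Omega - {\<gamma>}"
  shows "B \<in> B_U \<and> mu_hat B = 1"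
proof -
  have "\<gamma> \<in> Omega" using assms(1) unfolding Omega_def by auto
  then have "Omega - B = {\<gamma>}" using assms(2) by auto
  then have interior: "Omega - approx (Omega - B) n = nonzero_seqs n" for n
    unfolding approx_def nonzero_seqs_def assms(1) by auto
  have "B = (\<Union>n. nonzero_seqs n)"
    unfolding nonzero_seqs_def assms by (auto simp: fun_eq_iff) (metis le_refl)
  moreover have "B \<subseteq> Omega" using assms(2) by blast
  ultimately have "B \<in> upper_sets"
    unfolding upper_sets_def mem_Collect_eq interior by blast
  moreover have "(\<lambda>n. mu (Omega - approx (Omega - B) n)) \<longlonglongrightarrow> 1"
    unfolding interior mu_nonzero_seqs by (rule mu_n_nonzero_upto_self_tendsto)
  ultimately show ?thesis
    unfolding B_U_def mu_hat_def by (auto intro: convergentI limI)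
qed

end
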